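(* Let $G$ be a graph on $n$ vertices ($n$ even and sufficiently large) in which every vertex has at least $n-\sqrt{n}/4000$ neighbors, and let a perfect matching of $G$ be chosen uniformly at random. Then for every vertex $v$, there are at most $\sqrt{n}/9$ vertices $u$ such that the probability that $(u,v)$ is contained in the matching is less than $\frac{99}{100n}$. *)

theory Defs
  imports Complex_Main
begin

definition simple_graph :: "'a set \<Rightarrow> ('a \<Rightarrow> 'a \<Rightarrow> bool) \<Rightarrow> bool" where
  "simple_graph V E \<longleftrightarrow> finite V \<and> (\<forall>u v. E u v \<longrightarrow> E v u) \<and> (\<forall>u. \<not> E u u)
     \<and> (\<forall>u v. E u v \<longrightarrow> u \<in> V \<and> v \<in> V)"

definition degree :: "'a set \<Rightarrow> ('a \<Rightarrow> 'a \<Rightarrow> bool) \<Rightarrow> 'a \<Rightarrow> nat" where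
  "degree V E v = card {u \<in> V. E v u}"

definition perfect_matching :: "'a set \<Rightarrow> ('a \<Rightarrow> 'a \<Rightarrow> bool) \<Rightarrow> 'a set set \<Rightarrow> bool" where
  "perfect_matching V E M \<longleftrightarrow>
     M \<subseteq> {{u, v} | u v. u \<in> V \<and> v \<in> V \<and> E u v} \<and> (\<forall>v\<in>V. \<exists>!e. e \<in> M \<and> v \<in> e)"

definition perfect_matchings :: "'a set \<Rightarrow> ('a \<Rightarrow> 'a \<Rightarrow> bool) \<Rightarrow> 'a set set set" where
  "perfect_matchings V E = {M. perfect_matching V E M}"

definition match_prob :: "'a set \<Rightarrow> ('a \<Rightarrow> 'a \<Rightarrow> bool) \<Rightarrow> 'a \<Rightarrow> 'a \<Rightarrow> real" where
  "match_prob V E u v =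
     real (card {M \<in> perfect_matchings V E. {u, v} \<in> M}) / real (card (perfect_matchings V E))"

end

theory Submission
  imports Defs
begin

text \<open>
  Minimum degree at least \<open>(n - 1)/2\<close> already forces a perfect matching, by the usual
  augmentation argument for a maximum matching. For the edge probabilities, fix \<open>u \<noteq> v\<close>. A
  perfect matching \<open>M\<close> containing \<open>uv\<close>, together with a neighbour \<open>x\<close> of \<open>u\<close> whose partner
  \<open>y\<close> in \<open>M\<close> is a neighbour of \<open>v\<close>, is switched to \<open>M - {uv, xy} + {ux, vy}\<close>. This perfect
  matching avoids \<open>uv\<close> and determines \<open>(M, x)\<close>, and at least \<open>deg u + deg v - n\<close> vertices \<open>x\<close>
  qualify, so \<open>uv\<close> lies in a random perfect matching with probability at most
  \<open>1 / (deg u + deg v - n + 1) \<le> 1 / (n - \<surd>n/2000 + 1)\<close>. As these probabilities sum to 1 over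
  \<open>u \<noteq> v\<close>, at most \<open>\<surd>n/10\<close> of them can fall below \<open>99/(100 n)\<close>.
\<close>

definition edges :: "'a set \<Rightarrow> ('a \<Rightarrow> 'a \<Rightarrow> bool) \<Rightarrow> 'a set set" where
  "edges V E = {{u, v} | u v. u \<in> V \<and> v \<in> V \<and> E u v}"

definition matching :: "'a set \<Rightarrow> ('a \<Rightarrow> 'a \<Rightarrow> bool) \<Rightarrow> 'a set set \<Rightarrow> bool" where
  "matching V E M \<longleftrightarrow> M \<subseteq> edges V E \<and> pairwise disjnt M"

text \<open>Meaningful only for vertices covered by the matching \<open>M\<close>.\<close>

definition partner :: "'a set set \<Rightarrow> 'a \<Rightarrow> 'a" where
  "partner M x = (THE y. {x, y} \<in> M)"

lemma edgesE:
  assumes "simple_graph V E" "e \<in> edges V E"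
  obtains a b where "e = {a, b}" "a \<in> V" "b \<in> V" "E a b" "E b a" "a \<noteq> b"
  using assms unfolding edges_def simple_graph_def by blast

lemma finite_edges: "finite V \<Longrightarrow> finite (edges V E)"
  by (rule finite_subset[of _ "Pow V"]) (auto simp: edges_def)

lemma matching_same_edge:
  "matching V E M \<Longrightarrow> e \<in> M \<Longrightarrow> f \<in> M \<Longrightarrow> x \<in> e \<Longrightarrow> x \<in> f \<Longrightarrow> e = f"
  unfolding matching_def pairwise_def disjnt_def by blast

lemma matching_edgeD:
  assumes "simple_graph V E" "matching V E M" "{a, b} \<in> M"
  shows "E a b" "a \<noteq> b"
proof -
  have "{a, b} \<in> edges V E"
    using assms(2,3) unfolding matching_def by blast
  then obtain x y where "{a, b} = {x, y}" "E x y" "E y x" "x \<noteq> y"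
    by (rule edgesE[OF assms(1)])
  then show "E a b" "a \<noteq> b"
    by (auto simp: doubleton_eq_iff)
qed

lemma Union_matching_subset: "matching V E M \<Longrightarrow> \<Union>M \<subseteq> V"
  unfolding matching_def edges_def by blast

lemma perfect_matching_iff_matching:
  "perfect_matching V E M \<longleftrightarrow> matching V E M \<and> \<Union>M = V"
proof
  assume pm: "perfect_matching V E M"
  then have M_edges: "M \<subseteq> edges V E"
    unfolding perfect_matching_def edges_def by simp
  then have "\<Union>M \<subseteq> V"
    unfolding edges_def by blast
  with pm have "pairwise disjnt M" "V \<subseteq> \<Union>M"
    unfolding perfect_matching_def pairwise_def disjnt_def by blast+
  with M_edges \<open>\<Union>M \<subseteq> V\<close> show "matching V E M \<and> \<Union>M = V"
    unfolding matching_def by blast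
next
  assume "matching V E M \<and> \<Union>M = V"
  then show "perfect_matching V E M"
    unfolding perfect_matching_def matching_def edges_def pairwise_def disjnt_def by blast
qed

lemma finite_perfect_matchings: "finite V \<Longrightarrow> finite (perfect_matchings V E)"
  by (rule finite_subset[of _ "Pow (edges V E)"])
    (auto simp: perfect_matchings_def perfect_matching_iff_matching matching_def finite_edges)

lemma card_Union_matching:
  assumes "simple_graph V E" "matching V E M"
  shows "card (\<Union>M) = 2 * card M"
proof -
  have card_edge: "card e = 2" if "e \<in> M" for e
    using assms that unfolding matching_def by (auto elim!: edgesE[OF assms(1)])
  have "card (\<Union>M) = sum card M"
    using assms card_edge unfolding matching_def
    by (intro card_Union_disjoint) (auto intro: card_ge_0_finite)
  also have "\<dots> = 2 * card M"
    by (simp add: card_edge)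
  finally show ?thesis .
qed

lemma matching_Diff: "matching V E M \<Longrightarrow> matching V E (M - S)"
  unfolding matching_def by (auto intro: pairwise_subset)

lemma matching_insert:
  assumes "simple_graph V E" "matching V E M" "E a b" "a \<notin> \<Union>M" "b \<notin> \<Union>M"
  shows "matching V E (insert {a, b} M)"
proof -
  have "{a, b} \<in> edges V E"
    using assms(1,3) unfolding simple_graph_def edges_def by blast
  with assms(2,4,5) show ?thesis
    unfolding matching_def by (auto simp: pairwise_insert disjnt_def)
qed

lemma Union_Diff_matching:
  assumes "matching V E M" "S \<subseteq> M"
  shows "\<Union>(M - S) = \<Union>M - \<Union>S"
  using assms matching_same_edge[OF assms(1)] by blast

lemma partner_eq:
  assumes "simple_graph V E" "matching V E M" "{x, y} \<in> M"
  shows "partner M x = y"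
  unfolding partner_def
proof (rule the_equality)
  show "{x, y} \<in> M" by fact
  fix z
  assume "{x, z} \<in> M"
  then have "{x, z} = {x, y}"
    using matching_same_edge[OF assms(2) _ assms(3)] by blast
  moreover have "x \<noteq> y"
    using matching_edgeD[OF assms] by simp
  ultimately show "z = y"
    by (auto simp: doubleton_eq_iff)
qed

lemma partner_edge:
  assumes "simple_graph V E" "matching V E M" "x \<in> \<Union>M"
  shows "{x, partner M x} \<in> M"
proof -
  obtain e where "e \<in> M" "x \<in> e"
    using assms(3) by blast
  moreover from this obtain a b where "e = {a, b}"
    using assms(1,2) unfolding matching_def by (auto elim: edgesE)
  ultimately obtain y where "{x, y} \<in> M"
    by (auto simp: insert_commute)
  then show ?thesis
    using partner_eq[OF assms(1,2)] by simp
qed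

lemma
  assumes "simple_graph V E" "matching V E M" "x \<in> \<Union>M"
  shows partner_in_Union: "partner M x \<in> \<Union>M"
    and partner_partner: "partner M (partner M x) = x"
proof -
  have "{x, partner M x} \<in> M"
    using partner_edge[OF assms] .
  then show "partner M x \<in> \<Union>M"
    by blast
  from \<open>{x, partner M x} \<in> M\<close> have "{partner M x, x} \<in> M"
    by (simp add: insert_commute)
  then show "partner M (partner M x) = x"
    by (rule partner_eq[OF assms(1,2)])
qed

lemma partner_notin_edge:
  assumes sg: "simple_graph V E" and M: "matching V E M"
    and "e \<in> M" "x \<in> \<Union>M" "x \<notin> e"
  shows "partner M x \<notin> e"
proof
  assume "partner M x \<in> e"
  then have "{x, partner M x} = e"
    using matching_same_edge[OF M partner_edge[OF sg M \<open>x \<in> \<Union>M\<close>] \<open>e \<in> M\<close>] by blast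
  with \<open>x \<notin> e\<close> show False
    by blast
qed

lemma perfect_matching_partner_edge:
  assumes "simple_graph V E" "perfect_matching V E M" "x \<in> V"
  shows "{x, partner M x} \<in> M"
  using assms partner_edge[OF assms(1)] unfolding perfect_matching_iff_matching by blast

lemma matching_swap:
  assumes sg: "simple_graph V E" and M: "matching V E M"
    and ab: "{a, b} \<in> M" and cd: "{c, d} \<in> M" and ne: "{a, b} \<noteq> {c, d}"
    and "E a c" "E b d"
  shows "matching V E (insert {a, c} (insert {b, d} (M - {{a, b}, {c, d}})))"
    and "\<Union>(insert {a, c} (insert {b, d} (M - {{a, b}, {c, d}}))) = \<Union>M"
proof -
  define R where "R = M - {{a, b}, {c, d}}"
  have R: "matching V E R"
    unfolding R_def by (rule matching_Diff[OF M])
  have R_Union: "\<Union>R = \<Union>M - {a, b, c, d}"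
    using Union_Diff_matching[OF M, of "{{a, b}, {c, d}}"] ab cd unfolding R_def by auto
  have "{a, b} \<inter> {c, d} = {}"
    using matching_same_edge[OF M ab cd] ne by blast
  moreover have "a \<noteq> b" "c \<noteq> d"
    using matching_edgeD[OF sg M ab] matching_edgeD[OF sg M cd] by auto
  ultimately have distinct: "a \<noteq> b" "a \<noteq> c" "a \<noteq> d" "b \<noteq> c" "b \<noteq> d" "c \<noteq> d"
    by auto
  have "matching V E (insert {b, d} R)"
    by (rule matching_insert[OF sg R \<open>E b d\<close>]) (use R_Union in auto)
  then show "matching V E (insert {a, c} (insert {b, d} R))"
    by (rule matching_insert[OF sg _ \<open>E a c\<close>]) (use R_Union distinct in auto)
  show "\<Union>(insert {a, c} (insert {b, d} R)) = \<Union>M"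
    using R_Union ab cd by auto
qed

lemma matching_augment:
  assumes sg: "simple_graph V E" and M: "matching V E M" and xy: "{x, y} \<in> M"
    and a: "a \<notin> \<Union>M" and b: "b \<notin> \<Union>M" and "a \<noteq> b" and "E a x" "E b y"
  shows "matching V E (insert {a, x} (insert {b, y} (M - {{x, y}})))"
    and "\<Union>(insert {a, x} (insert {b, y} (M - {{x, y}}))) = insert a (insert b (\<Union>M))"
proof -
  define R where "R = M - {{x, y}}"
  have R: "matching V E R"
    unfolding R_def by (rule matching_Diff[OF M])
  have R_Union: "\<Union>R = \<Union>M - {x, y}"
    using Union_Diff_matching[OF M, of "{{x, y}}"] xy unfolding R_def by auto
  have "x \<noteq> y" "x \<in> \<Union>M" "y \<in> \<Union>M"
    using matching_edgeD[OF sg M xy] xy by auto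
  have "matching V E (insert {b, y} R)"
    by (rule matching_insert[OF sg R \<open>E b y\<close>]) (use R_Union b in auto)
  then show "matching V E (insert {a, x} (insert {b, y} R))"
    by (rule matching_insert[OF sg _ \<open>E a x\<close>])
      (use R_Union a b \<open>a \<noteq> b\<close> \<open>x \<noteq> y\<close> \<open>x \<in> \<Union>M\<close> \<open>y \<in> \<Union>M\<close> in auto)
  show "\<Union>(insert {a, x} (insert {b, y} R)) = insert a (insert b (\<Union>M))"
    using R_Union \<open>x \<in> \<Union>M\<close> \<open>y \<in> \<Union>M\<close> by auto
qed

subsection \<open>Existence of a perfect matching\<close>

lemma matched_neighbourhoods_meet:
  assumes sg: "simple_graph V E" and M: "matching V E M"
    and a: "a \<in> V - \<Union>M" and b: "b \<in> V - \<Union>M" and "a \<noteq> b"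
    and NA: "{x \<in> V. E a x} \<subseteq> \<Union>M" and NB: "{x \<in> V. E b x} \<subseteq> \<Union>M"
    and deg: "card V \<le> degree V E a + degree V E b + 1"
  obtains x y where "{x, y} \<in> M" "E a x" "E b y"
proof -
  have finV: "finite V"
    using sg unfolding simple_graph_def by blast
  have sub: "\<Union>M \<subseteq> V"
    by (rule Union_matching_subset[OF M])
  have "card (insert a (insert b (\<Union>M))) \<le> card V"
    using a b sub finV by (intro card_mono) auto
  then have matched: "card (\<Union>M) + 2 \<le> card V"
    using a b \<open>a \<noteq> b\<close> finite_subset[OF sub finV] by simp
  have inj: "inj_on (partner M) (\<Union>M)"
    by (rule inj_on_inverseI[where g = "partner M"]) (rule partner_partner[OF sg M])
  have "{x \<in> V. E a x} \<inter> partner M ` {x \<in> V. E b x} \<noteq> {}"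
  proof
    assume disjoint: "{x \<in> V. E a x} \<inter> partner M ` {x \<in> V. E b x} = {}"
    have "partner M ` {x \<in> V. E b x} \<subseteq> \<Union>M"
      using NB partner_in_Union[OF sg M] by blast
    then have "card ({x \<in> V. E a x} \<union> partner M ` {x \<in> V. E b x}) \<le> card (\<Union>M)"
      using NA finite_subset[OF sub finV] by (intro card_mono) auto
    moreover have "card ({x \<in> V. E a x} \<union> partner M ` {x \<in> V. E b x})
        = degree V E a + degree V E b"
      using disjoint finV card_image[OF inj_on_subset[OF inj NB]]
      unfolding degree_def by (subst card_Un_disjoint) auto
    ultimately show False
      using matched deg by linarith
  qed
  then obtain y where y: "y \<in> V" "E b y" "E a (partner M y)"
    by blast
  have "{y, partner M y} \<in> M"
    using partner_edge[OF sg M] NB y by blast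
  then have "{partner M y, y} \<in> M"
    by (simp add: insert_commute)
  with y show thesis
    using that by blast
qed

lemma matching_extendable:
  assumes sg: "simple_graph V E" and M: "matching V E M"
    and a: "a \<in> V - \<Union>M" and b: "b \<in> V - \<Union>M" and "a \<noteq> b"
    and deg: "card V \<le> degree V E a + degree V E b + 1"
  obtains M' where "matching V E M'" "\<Union>M \<subset> \<Union>M'"
proof (cases "\<exists>w\<in>{a, b}. \<exists>c. E w c \<and> c \<notin> \<Union>M")
  case True
  then obtain w c where "w \<in> {a, b}" "E w c" "c \<notin> \<Union>M"
    by blast
  then have "matching V E (insert {w, c} M)" "\<Union>M \<subset> \<Union>(insert {w, c} M)"
    using matching_insert[OF sg M] a b by auto
  then show thesis
    using that by blast
next
  case False
  then have "{x \<in> V. E a x} \<subseteq> \<Union>M" "{x \<in> V. E b x} \<subseteq> \<Union>M"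
    by auto
  then obtain x y where "{x, y} \<in> M" "E a x" "E b y"
    using matched_neighbourhoods_meet[OF sg M a b \<open>a \<noteq> b\<close> _ _ deg] by blast
  then show thesis
    using that matching_augment[OF sg M _ _ _ \<open>a \<noteq> b\<close>] a b by blast
qed

lemma perfect_matching_exists:
  assumes sg: "simple_graph V E" and even: "even (card V)"
    and deg: "\<forall>v\<in>V. card V \<le> 2 * degree V E v + 1"
  shows "perfect_matchings V E \<noteq> {}"
proof -
  have finV: "finite V"
    using sg unfolding simple_graph_def by blast
  have "matching V E {}"
    unfolding matching_def by simp
  moreover have "card (\<Union>M) < Suc (card V)" if "matching V E M" for M
    using card_mono[OF finV Union_matching_subset[OF that]] by simp
  ultimately obtain M where M: "matching V E M"
    and maximal: "\<And>M'. matching V E M' \<Longrightarrow> card (\<Union>M') \<le> card (\<Union>M)"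
    using ex_has_greatest_nat[of "matching V E" "{}" "\<lambda>M. card (\<Union>M)"] by metis
  have "\<Union>M = V"
  proof (rule ccontr)
    assume "\<Union>M \<noteq> V"
    have sub: "\<Union>M \<subseteq> V"
      by (rule Union_matching_subset[OF M])
    have "card (V - \<Union>M) = card V - 2 * card M"
      using card_Diff_subset[OF finite_subset[OF sub finV] sub] card_Union_matching[OF sg M] by simp
    moreover have "card (V - \<Union>M) \<noteq> 0"
      using \<open>\<Union>M \<noteq> V\<close> sub finV by auto
    ultimately have "card (V - \<Union>M) \<ge> 2"
      using even by presburger
    then have "\<not> (\<forall>a\<in>V - \<Union>M. \<forall>b\<in>V - \<Union>M. a = b)"
      using card_le_Suc0_iff_eq[OF finite_Diff[OF finV], of "\<Union>M"] by linarith
    then obtain a b where a: "a \<in> V - \<Union>M" and b: "b \<in> V - \<Union>M" and "a \<noteq> b"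
      by blast
    moreover have "card V \<le> degree V E a + degree V E b + 1"
      using deg[rule_format, of a] deg[rule_format, of b] a b by simp
    ultimately obtain M' where "matching V E M'" "\<Union>M \<subset> \<Union>M'"
      by (rule matching_extendable[OF sg M])
    then have "card (\<Union>M) < card (\<Union>M')"
      using finite_subset[OF Union_matching_subset finV] by (intro psubset_card_mono) auto
    then show False
      using maximal[OF \<open>matching V E M'\<close>] by simp
  qed
  with M show ?thesis
    unfolding perfect_matchings_def perfect_matching_iff_matching by blast
qed

subsection \<open>Switching\<close>

definition switchable :: "'a set \<Rightarrow> ('a \<Rightarrow> 'a \<Rightarrow> bool) \<Rightarrow> 'a \<Rightarrow> 'a \<Rightarrow> 'a set set \<Rightarrow> 'a set" where
  "switchable V E u v M = {x \<in> V - {u, v}. E u x \<and> E v (partner M x)}"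

definition switch :: "'a \<Rightarrow> 'a \<Rightarrow> 'a set set \<Rightarrow> 'a \<Rightarrow> 'a set set" where
  "switch u v M x = insert {u, x} (insert {v, partner M x} (M - {{u, v}, {x, partner M x}}))"

lemma
  assumes sg: "simple_graph V E" and pm: "perfect_matching V E M" and uv: "{u, v} \<in> M"
    and x: "x \<in> switchable V E u v M"
  shows perfect_matching_switch: "perfect_matching V E (switch u v M x)"
    and partner_switch: "partner (switch u v M x) u = x" "partner (switch u v M x) v = partner M x"
    and edge_notin_switch: "{u, v} \<notin> switch u v M x"
    and switch_Diff: "switch u v M x - {{u, x}, {v, partner M x}} = M - {{u, v}, {x, partner M x}}"
proof -
  have M: "matching V E M" "\<Union>M = V"
    using pm unfolding perfect_matching_iff_matching by blast+
  have x: "x \<in> V - {u, v}" "E u x" "E v (partner M x)"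
    using x unfolding switchable_def by auto
  have xy: "{x, partner M x} \<in> M"
    using perfect_matching_partner_edge[OF sg pm] x(1) by blast
  have "{u, v} \<noteq> {x, partner M x}"
    using x(1) by auto
  note swap = matching_swap[OF sg M(1) uv xy this x(2,3)]
  have sw: "matching V E (switch u v M x)"
    unfolding switch_def by (rule swap(1))
  then show "perfect_matching V E (switch u v M x)"
    using swap(2) M(2) unfolding perfect_matching_iff_matching switch_def by simp
  show pu: "partner (switch u v M x) u = x"
    by (rule partner_eq[OF sg sw]) (simp add: switch_def)
  show "partner (switch u v M x) v = partner M x"
    by (rule partner_eq[OF sg sw]) (simp add: switch_def)
  show "{u, v} \<notin> switch u v M x"
  proof
    assume "{u, v} \<in> switch u v M x"
    then have "partner (switch u v M x) u = v"
      by (rule partner_eq[OF sg sw])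
    with pu x(1) show False
      by simp
  qed
  have "\<Union>(M - {{u, v}, {x, partner M x}}) = \<Union>M - {u, v, x, partner M x}"
    using Union_Diff_matching[OF M(1), of "{{u, v}, {x, partner M x}}"] uv xy by auto
  then have "{u, x} \<notin> M - {{u, v}, {x, partner M x}}"
    and "{v, partner M x} \<notin> M - {{u, v}, {x, partner M x}}"
    by blast+
  moreover have "\<And>e f R. e \<notin> R \<Longrightarrow> f \<notin> R \<Longrightarrow> insert e (insert f R) - {e, f} = R"
    by blast
  ultimately show "switch u v M x - {{u, x}, {v, partner M x}} = M - {{u, v}, {x, partner M x}}"
    unfolding switch_def by blast
qed

lemma inj_on_switch:
  assumes sg: "simple_graph V E"
  shows "inj_on (\<lambda>(M, x). switch u v M x)
    (SIGMA M:{M \<in> perfect_matchings V E. {u, v} \<in> M}. switchable V E u v M)"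
proof (rule inj_onI, clarsimp)
  fix M1 x1 M2 x2
  assume M1: "M1 \<in> perfect_matchings V E" "{u, v} \<in> M1" "x1 \<in> switchable V E u v M1"
    and M2: "M2 \<in> perfect_matchings V E" "{u, v} \<in> M2" "x2 \<in> switchable V E u v M2"
    and eq: "switch u v M1 x1 = switch u v M2 x2"
  have pm: "perfect_matching V E M1" "perfect_matching V E M2"
    using M1(1) M2(1) unfolding perfect_matchings_def by auto
  note switch1 = partner_switch[OF sg pm(1) M1(2,3)] switch_Diff[OF sg pm(1) M1(2,3)]
  note switch2 = partner_switch[OF sg pm(2) M2(2,3)] switch_Diff[OF sg pm(2) M2(2,3)]
  have "x1 = x2" "partner M1 x1 = partner M2 x2"
    using switch1(1,2) switch2(1,2) eq by simp_all
  define S where "S = {{u, v}, {x1, partner M1 x1}}"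
  have "M1 - S = M2 - S"
    using switch1(3) switch2(3) eq \<open>x1 = x2\<close> \<open>partner M1 x1 = partner M2 x2\<close>
    unfolding S_def by simp
  moreover have "{x1, partner M1 x1} \<in> M1" "{x2, partner M2 x2} \<in> M2"
    using perfect_matching_partner_edge[OF sg] pm M1(3) M2(3) unfolding switchable_def by auto
  then have "S \<subseteq> M1" "S \<subseteq> M2"
    using M1(2) M2(2) \<open>x1 = x2\<close> \<open>partner M1 x1 = partner M2 x2\<close>
    unfolding S_def by simp_all
  ultimately show "M1 = M2 \<and> x1 = x2"
    using \<open>x1 = x2\<close> by (metis Diff_partition)
qed

lemma card_non_neighbours:
  assumes sg: "simple_graph V E" and u: "u \<in> V"
  shows "card {x \<in> V - {u}. \<not> E u x} + degree V E u + 1 = card V"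
proof -
  have finV: "finite V"
    using sg unfolding simple_graph_def by blast
  have split: "{x \<in> V - {u}. \<not> E u x} \<union> {x \<in> V. E u x} = V - {u}"
    using sg unfolding simple_graph_def by blast
  have "card ({x \<in> V - {u}. \<not> E u x} \<union> {x \<in> V. E u x})
      = card {x \<in> V - {u}. \<not> E u x} + degree V E u"
    unfolding degree_def using finV by (intro card_Un_disjoint) auto
  then show ?thesis
    unfolding split using card_Suc_Diff1[OF finV u] by simp
qed

lemma card_switchable_ge:
  assumes sg: "simple_graph V E" and pm: "perfect_matching V E M" and uv: "{u, v} \<in> M"
  shows "degree V E u + degree V E v \<le> card (switchable V E u v M) + card V"
proof -
  have M: "matching V E M" "\<Union>M = V"
    using pm unfolding perfect_matching_iff_matching by blast+
  have finV: "finite V"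
    using sg unfolding simple_graph_def by blast
  have "u \<noteq> v" "u \<in> V" "v \<in> V"
    using matching_edgeD[OF sg M(1) uv] uv M(2) by auto
  define non_u where "non_u = {x \<in> V - {u}. \<not> E u x}"
  define bad where "bad = {x \<in> V - {u, v}. \<not> E v (partner M x)}"
  have "card (V - {u, v}) \<le> card (switchable V E u v M \<union> non_u \<union> bad)"
    by (rule card_mono) (use finV in \<open>auto simp: switchable_def non_u_def bad_def\<close>)
  also have "\<dots> \<le> card (switchable V E u v M) + card non_u + card bad"
    using card_Un_le[of "switchable V E u v M" non_u] card_Un_le[of _ bad]
    by (meson add_right_mono order_trans)
  finally have "card (V - {u, v}) \<le> card (switchable V E u v M) + card non_u + card bad" .
  moreover have "card bad \<le> card {x \<in> V - {v}. \<not> E v x}"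
  proof (rule card_inj_on_le)
    show "inj_on (partner M) bad"
      by (rule inj_on_inverseI[where g = "partner M"])
        (use partner_partner[OF sg M(1)] M(2) in \<open>auto simp: bad_def\<close>)
    show "partner M ` bad \<subseteq> {x \<in> V - {v}. \<not> E v x}"
      using partner_in_Union[OF sg M(1)] partner_notin_edge[OF sg M(1) uv] M(2)
      unfolding bad_def by auto
  qed (use finV in auto)
  moreover have "card (V - {u, v}) + 2 = card V"
    using finV \<open>u \<noteq> v\<close> \<open>u \<in> V\<close> \<open>v \<in> V\<close> card_mono[OF finV, of "{u, v}"]
    by (simp add: card_Diff_subset)
  ultimately show ?thesis
    using card_non_neighbours[OF sg \<open>u \<in> V\<close>] card_non_neighbours[OF sg \<open>v \<in> V\<close>]
    unfolding non_u_def by linarith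
qed

lemma card_containing_edge_le:
  assumes sg: "simple_graph V E"
  shows "card {M \<in> perfect_matchings V E. {u, v} \<in> M} * (degree V E u + degree V E v - card V)
    \<le> card {M \<in> perfect_matchings V E. {u, v} \<notin> M}"
proof -
  define A where "A = {M \<in> perfect_matchings V E. {u, v} \<in> M}"
  define B where "B = {M \<in> perfect_matchings V E. {u, v} \<notin> M}"
  have finV: "finite V"
    using sg unfolding simple_graph_def by blast
  have A: "perfect_matching V E M" "{u, v} \<in> M" if "M \<in> A" for M
    using that unfolding A_def perfect_matchings_def by auto
  have switch_in_B: "switch u v M x \<in> B" if "M \<in> A" "x \<in> switchable V E u v M" for M x
    using perfect_matching_switch[OF sg A[OF that(1)] that(2)]
      edge_notin_switch[OF sg A[OF that(1)] that(2)]
    unfolding B_def perfect_matchings_def by simp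
  have switchable_ge: "degree V E u + degree V E v - card V \<le> card (switchable V E u v M)"
    if "M \<in> A" for M
    using card_switchable_ge[OF sg A[OF that]] by linarith
  have "inj_on (\<lambda>(M, x). switch u v M x) (Sigma A (switchable V E u v))"
    unfolding A_def by (rule inj_on_switch[OF sg])
  moreover have "(\<lambda>(M, x). switch u v M x) ` Sigma A (switchable V E u v) \<subseteq> B"
    using switch_in_B by auto
  moreover have "finite B"
    unfolding B_def using finite_perfect_matchings[OF finV] by simp
  ultimately have "card (Sigma A (switchable V E u v)) \<le> card B"
    by (rule card_inj_on_le)
  moreover have "card A * (degree V E u + degree V E v - card V)
      \<le> (\<Sum>M\<in>A. card (switchable V E u v M))"
    using sum_bounded_below[of A _ "\<lambda>M. card (switchable V E u v M)"] switchable_ge by simp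
  moreover have "finite A" "\<forall>M\<in>A. finite (switchable V E u v M)"
    unfolding A_def switchable_def using finite_perfect_matchings[OF finV] finV by simp_all
  ultimately show ?thesis
    unfolding A_def B_def by simp
qed

subsection \<open>Edge probabilities\<close>

lemma match_prob_mult_le:
  assumes sg: "simple_graph V E"
  shows "match_prob V E u v * (real (degree V E u) + real (degree V E v) - real (card V) + 1) \<le> 1"
proof -
  define a where "a = card {M \<in> perfect_matchings V E. {u, v} \<in> M}"
  define b where "b = card {M \<in> perfect_matchings V E. {u, v} \<notin> M}"
  define k where "k = degree V E u + degree V E v - card V"
  have "finite (perfect_matchings V E)"
    using finite_perfect_matchings sg unfolding simple_graph_def by blast
  then have "a + b = card ({M \<in> perfect_matchings V E. {u, v} \<in> M}
      \<union> {M \<in> perfect_matchings V E. {u, v} \<notin> M})"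
    unfolding a_def b_def by (intro card_Un_disjoint[symmetric]) auto
  also have "\<dots> = card (perfect_matchings V E)"
    by (rule arg_cong[where f = card]) blast
  finally have prob: "match_prob V E u v = real a / real (a + b)"
    unfolding match_prob_def by (simp add: a_def)
  have "a * k \<le> b"
    unfolding a_def b_def k_def by (rule card_containing_edge_le[OF sg])
  then have ak: "real a * (real k + 1) \<le> real (a + b)"
    by (simp add: algebra_simps flip: of_nat_mult)
  show ?thesis
  proof (cases "a + b = 0")
    case True
    then show ?thesis
      by (simp add: prob)
  next
    case False
    have "real (degree V E u) + real (degree V E v) - real (card V) \<le> real k"
      unfolding k_def by (cases "card V \<le> degree V E u + degree V E v") (auto simp: of_nat_diff)
    then have "match_prob V E u v * (real (degree V E u) + real (degree V E v) - real (card V) + 1)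
        \<le> match_prob V E u v * (real k + 1)"
      by (intro mult_left_mono) (simp_all add: prob)
    also have "\<dots> \<le> 1"
      using ak False by (simp add: prob pos_divide_le_eq del: of_nat_add)
    finally show ?thesis .
  qed
qed

lemma match_prob_le_min_degree:
  assumes sg: "simple_graph V E" and deg: "\<forall>w\<in>V. d \<le> real (degree V E w)"
    and "u \<in> V" "v \<in> V" and pos: "real (card V) < 2 * d + 1"
  shows "match_prob V E u v \<le> 1 / (2 * d - real (card V) + 1)"
proof -
  have "2 * d - real (card V) + 1 \<le> real (degree V E u) + real (degree V E v) - real (card V) + 1"
    using deg[rule_format, OF \<open>u \<in> V\<close>] deg[rule_format, OF \<open>v \<in> V\<close>] by linarith
  moreover have "0 \<le> match_prob V E u v"
    unfolding match_prob_def by simp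
  ultimately have "match_prob V E u v * (2 * d - real (card V) + 1) \<le> 1"
    using match_prob_mult_le[OF sg, of u v] mult_left_mono order_trans by blast
  then show ?thesis
    using pos by (simp add: pos_le_divide_eq)
qed

lemma sum_match_prob:
  assumes sg: "simple_graph V E" and v: "v \<in> V" and ne: "perfect_matchings V E \<noteq> {}"
  shows "(\<Sum>u\<in>V - {v}. match_prob V E u v) = 1"
proof -
  define PM where "PM = perfect_matchings V E"
  have finV: "finite V"
    using sg unfolding simple_graph_def by blast
  have finPM: "finite PM"
    unfolding PM_def by (rule finite_perfect_matchings[OF finV])
  have "(\<Union>u\<in>V - {v}. {M \<in> PM. {u, v} \<in> M}) = PM"
  proof (intro equalityI subsetI)
    fix M
    assume "M \<in> PM"
    then have pm: "perfect_matching V E M"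
      unfolding PM_def perfect_matchings_def by simp
    have "{v, partner M v} \<in> M"
      by (rule perfect_matching_partner_edge[OF sg pm v])
    moreover from this have "E v (partner M v)" "v \<noteq> partner M v"
      using matching_edgeD[OF sg] pm unfolding perfect_matching_iff_matching by blast+
    ultimately show "M \<in> (\<Union>u\<in>V - {v}. {M \<in> PM. {u, v} \<in> M})"
      using \<open>M \<in> PM\<close> sg unfolding simple_graph_def by (auto simp: insert_commute)
  qed blast
  moreover have "{M \<in> PM. {u, v} \<in> M} \<inter> {M \<in> PM. {u', v} \<in> M} = {}" if "u \<noteq> u'" for u u'
  proof -
    have "partner M v = u" if "M \<in> PM" "{u, v} \<in> M" for M u
      using partner_eq[OF sg, of M v u] that
      unfolding PM_def perfect_matchings_def perfect_matching_iff_matching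
      by (simp add: insert_commute)
    with \<open>u \<noteq> u'\<close> show ?thesis
      by blast
  qed
  ultimately have "(\<Sum>u\<in>V - {v}. card {M \<in> PM. {u, v} \<in> M}) = card PM"
    using card_UN_disjoint[of "V - {v}" "\<lambda>u. {M \<in> PM. {u, v} \<in> M}"] finV finPM by simp
  moreover have "card PM > 0"
    using ne finPM unfolding PM_def by (simp add: card_gt_0_iff)
  ultimately show ?thesis
    unfolding match_prob_def PM_def[symmetric]
    by (simp flip: sum_divide_distrib of_nat_sum)
qed

lemma card_below_threshold:
  fixes p :: "'a \<Rightarrow> real"
  assumes "finite S" "sum p S = 1" "\<forall>x\<in>S. p x \<le> q"
  shows "real (card {x \<in> S. p x < c}) * (q - c) \<le> real (card S) * q - 1"
proof -
  define K where "K = {x \<in> S. p x < c}"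
  have K: "K \<subseteq> S" "finite K"
    using assms(1) unfolding K_def by auto
  have "1 = sum p (S - K) + sum p K"
    using sum.subset_diff[OF K(1) assms(1), of p] assms(2) by simp
  also have "\<dots> \<le> real (card (S - K)) * q + real (card K) * c"
    using assms(3) by (intro add_mono sum_bounded_above) (auto simp: K_def)
  also have "real (card (S - K)) = real (card S) - real (card K)"
    using K assms(1) by (simp add: card_Diff_subset of_nat_diff card_mono)
  finally show ?thesis
    unfolding K_def[symmetric] by (simp add: algebra_simps)
qed

lemma sqrt_le_self: "1 \<le> x \<Longrightarrow> sqrt x \<le> x"
  using mult_left_mono[of 1 "sqrt x" "sqrt x"] by simp

lemma threshold_count_arith:
  fixes n k D :: real
  assumes n: "200 \<le> n" and k: "0 \<le> k" and D: "D = n - sqrt n / 2000 + 1"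
    and bound: "k * (1 / D - 99 / (100 * n)) \<le> (n - 1) / D - 1"
  shows "k \<le> sqrt n / 9"
proof -
  have "sqrt n \<le> n"
    using n by (simp add: sqrt_le_self)
  then have D_pos: "0 < D" and D_le: "D \<le> n + 1"
    using n unfolding D by auto
  have "k * (1 - 99 * D / (100 * n)) = k * (1 / D - 99 / (100 * n)) * D"
    using D_pos n by (simp add: field_simps)
  also have "\<dots> \<le> ((n - 1) / D - 1) * D"
    using bound D_pos by (intro mult_right_mono) auto
  also have "\<dots> = n - 1 - D"
    using D_pos by (simp add: field_simps)
  finally have scaled: "k * (1 - 99 * D / (100 * n)) \<le> n - 1 - D" .
  have "99 * D / (100 * n) \<le> 199 / 200"
    using D_le n by (simp add: pos_divide_le_eq)
  then have "k * (1 / 200) \<le> k * (1 - 99 * D / (100 * n))"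
    using k by (intro mult_left_mono) auto
  with scaled have "k / 200 \<le> sqrt n / 2000"
    unfolding D by linarith
  then show ?thesis
    using k by simp
qed

theorem mainTheorem15:
  shows "\<exists>N::nat. \<forall>(V::nat set) E n. n \<ge> N \<longrightarrow> even n \<longrightarrow> simple_graph V E \<longrightarrow> card V = n \<longrightarrow>
     (\<forall>v\<in>V. real (degree V E v) \<ge> real n - sqrt (real n) / 4000) \<longrightarrow>
     (\<forall>v\<in>V. real (card {u \<in> V. u \<noteq> v \<and> match_prob V E u v < 99 / (100 * real n)})
               \<le> sqrt (real n) / 9)"
proof (intro exI[of _ 200] allI impI ballI)
  fix V :: "nat set" and E n v
  assume n: "200 \<le> n" and "even n" and sg: "simple_graph V E" and V: "card V = n"
    and deg: "\<forall>v\<in>V. real n - sqrt (real n) / 4000 \<le> real (degree V E v)" and v: "v \<in> V"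
  define D where "D = real n - sqrt (real n) / 2000 + 1"
  define low where "low = {u \<in> V - {v}. match_prob V E u v < 99 / (100 * real n)}"
  have "sqrt (real n) \<le> real n"
    using n by (simp add: sqrt_le_self)
  have "real (card V) \<le> real (2 * degree V E w + 1)" if "w \<in> V" for w
    using deg[rule_format, OF that] V \<open>sqrt (real n) \<le> real n\<close> by simp
  then have "perfect_matchings V E \<noteq> {}"
    using perfect_matching_exists[OF sg] \<open>even n\<close> V by (simp only: of_nat_le_iff) blast
  moreover have "match_prob V E u v \<le> 1 / D" if "u \<in> V - {v}" for u
    using match_prob_le_min_degree[OF sg deg, of u v] that v V \<open>sqrt (real n) \<le> real n\<close>
    unfolding D_def by (simp add: algebra_simps)
  moreover have "finite V"
    using sg unfolding simple_graph_def by blast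
  ultimately have "real (card low) * (1 / D - 99 / (100 * real n))
      \<le> real (card (V - {v})) * (1 / D) - 1"
    unfolding low_def using card_below_threshold[OF _ sum_match_prob[OF sg v]] by blast
  also have "real (card (V - {v})) = real n - 1"
    using \<open>finite V\<close> v V n by (simp add: of_nat_diff)
  finally have "real (card low) \<le> sqrt (real n) / 9"
    using n by (intro threshold_count_arith[OF _ _ D_def]) simp_all
  moreover have "{u \<in> V. u \<noteq> v \<and> match_prob V E u v < 99 / (100 * real n)} = low"
    unfolding low_def by blast
  ultimately show "real (card {u \<in> V. u \<noteq> v \<and> match_prob V E u v < 99 / (100 * real n)})
      \<le> sqrt (real n) / 9"
    by simp
qed

end
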